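(* Let $(X,Y)$ be a random pair with $X\in\mathbb{R}^p$, $Y\in\mathbb{R}^q$ and $(X_1,Y_1),\ldots,(X_4,Y_4)$ i.i.d. copies of it. If $\mathbb{E}[|X|^2]<\infty$, $\mathbb{E}[|Y|^2]<\infty$ and $\mathbb{E}[|X|^2|Y|^2]<\infty$, then $\mathrm{Var}(h_4)<\infty$, where $h_4=h_4((X_1,Y_1),\ldots,(X_4,Y_4))$. Consequently $\mathrm{Var}(h_1)<\infty$ and $\mathrm{Var}(h_2)<\infty$.
   Context: $|\cdot|$ Euclidean norm. The kernel $h_4$ is $$h_4((X_1,Y_1),\ldots,(X_4,Y_4))=\frac14\sum_{1\le i,j\le4,i\ne j}|X_i-X_j||Y_i-Y_j|-\frac14\sum_{i=1}^4\Big(\sum_{j\ne i}|X_i-X_j|\Big)\Big(\sum_{j\ne i}|Y_i-Y_j|\Big)+\frac1{24}\Big(\sum_{i\ne j}|X_i-X_j|\Big)\Big(\sum_{i\ne j}|Y_i-Y_j|\Big).$$ $h_1((X_1,Y_1))=\mathbb{E}_{2,3,4}[h_4]$ (expectation over $(X_2,Y_2),(X_3,Y_3),(X_4,Y_4)$) and $h_2((X_1,Y_1),(X_2,Y_2))=\mathbb{E}_{3,4}[h_4]$ (expectation over $(X_3,Y_3),(X_4,Y_4)$). *)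

theory Defs
  imports "HOL-Probability.Probability"
begin

text \<open>The kernel h4 evaluated on an indexed family Z of four pairs (X_i, Y_i),
  indices i = 0..3 (representing 1..4).\<close>
definition h4_fam :: "(nat \<Rightarrow> ('a::euclidean_space \<times> 'b::euclidean_space)) \<Rightarrow> real" where
  "h4_fam Z =
     (let dX = (\<lambda>i j. norm (fst (Z i) - fst (Z j)));
          dY = (\<lambda>i j. norm (snd (Z i) - snd (Z j)));
          I = {0..<4::nat}
      in (1/4) * (\<Sum>i\<in>I. \<Sum>j\<in>I - {i}. dX i j * dY i j)
         - (1/4) * (\<Sum>i\<in>I. (\<Sum>j\<in>I - {i}. dX i j) * (\<Sum>j\<in>I - {i}. dY i j))
         + (1/24) * (\<Sum>i\<in>I. \<Sum>j\<in>I - {i}. dX i j) * (\<Sum>i\<in>I. \<Sum>j\<in>I - {i}. dY i j))"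

definition h4 :: "('a::euclidean_space \<times> 'b::euclidean_space) \<Rightarrow> ('a \<times> 'b) \<Rightarrow> ('a \<times> 'b) \<Rightarrow> ('a \<times> 'b) \<Rightarrow> real" where
  "h4 z1 z2 z3 z4 = h4_fam (\<lambda>i. [z1, z2, z3, z4] ! i)"

text \<open>h1 and h2: conditional expectations of h4 given the first one / two arguments,
  where the remaining arguments are independent with law mu.\<close>
definition h1 :: "('a::euclidean_space \<times> 'b::euclidean_space) measure \<Rightarrow> ('a \<times> 'b) \<Rightarrow> real" where
  "h1 mu z1 = (\<integral>w. h4 z1 (fst w) (fst (snd w)) (snd (snd w)) \<partial>(mu \<Otimes>\<^sub>M (mu \<Otimes>\<^sub>M mu)))"

definition h2 :: "('a::euclidean_space \<times> 'b::euclidean_space) measure \<Rightarrow> ('a \<times> 'b) \<Rightarrow> ('a \<times> 'b) \<Rightarrow> real" where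
  "h2 mu z1 z2 = (\<integral>w. h4 z1 z2 (fst w) (snd w) \<partial>(mu \<Otimes>\<^sub>M mu))"

definition finite_variance :: "'c measure \<Rightarrow> ('c \<Rightarrow> real) \<Rightarrow> bool" where
  "finite_variance M f \<longleftrightarrow> integrable M f \<and> integrable M (\<lambda>x. (f x)\<^sup>2)"

end

theory Submission
  imports Defs
begin

text \<open>Every pairwise distance among the four points is at most the sum of their norms, so
  \<open>\<bar>h4\<bar>\<close> is bounded by a constant times \<open>\<Prod>\<^sub>i (1 + |X\<^sub>i|)(1 + |Y\<^sub>i|)\<close>. The square of this
  product weight factorises over the independent coordinates, and each factor
  \<open>(1 + |X|)\<^sup>2(1 + |Y|)\<^sup>2 \<le> 4(1 + |X|\<^sup>2 + |Y|\<^sup>2 + |X|\<^sup>2|Y|\<^sup>2)\<close> is integrable by the moment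
  assumptions. Integrating out some of the coordinates keeps a bound of the same product form
  in the remaining ones, which gives the claims for \<open>h1\<close> and \<open>h2\<close>.\<close>

lemma norm_diff_le_sum_norm:
  fixes f :: "'i \<Rightarrow> 'a::real_normed_vector"
  assumes "finite I" "i \<in> I" "j \<in> I"
  shows "norm (f i - f j) \<le> (\<Sum>k\<in>I. norm (f k))"
proof (cases "i = j")
  case True
  then show ?thesis by (simp add: sum_nonneg)
next
  case False
  have "norm (f i - f j) \<le> (\<Sum>k\<in>{i, j}. norm (f k))"
    using False norm_triangle_ineq4 by simp
  also have "\<dots> \<le> (\<Sum>k\<in>I. norm (f k))"
    using assms by (intro sum_mono2) auto
  finally show ?thesis .
qed

lemma sum_le_prod_one_plus:
  fixes a :: "'i \<Rightarrow> real"
  assumes "\<And>i. i \<in> S \<Longrightarrow> 0 \<le> a i"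
  shows "(\<Sum>i\<in>S. a i) \<le> (\<Prod>i\<in>S. 1 + a i)"
  using assms
proof (induction S rule: infinite_finite_induct)
  case (insert x S)
  have "1 \<le> (\<Prod>i\<in>S. 1 + a i)"
    using insert.prems by (intro prod_ge_1) auto
  then have "a x \<le> a x * (\<Prod>i\<in>S. 1 + a i)"
    using insert.prems mult_left_mono[of 1 _ "a x"] by simp
  then have "a x + (\<Sum>i\<in>S. a i) \<le> a x * (\<Prod>i\<in>S. 1 + a i) + (\<Prod>i\<in>S. 1 + a i)"
    using insert by simp
  then show ?case
    using insert by (simp add: algebra_simps)
qed simp_all

lemma sum_four_remove_le:
  fixes t :: "nat \<Rightarrow> real"
  assumes "i < 4" "\<And>j. j < 4 \<Longrightarrow> t j \<le> c"
  shows "(\<Sum>j\<in>{0..<4} - {i}. t j) \<le> 3 * c"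
proof -
  have "(\<Sum>j\<in>{0..<4} - {i}. t j) \<le> of_nat (card ({0..<4::nat} - {i})) * c"
    using assms(2) by (intro sum_bounded_above) auto
  then show ?thesis
    using assms(1) by (simp add: card_Diff_singleton)
qed

lemma sum_four_le:
  fixes t :: "nat \<Rightarrow> real"
  assumes "\<And>i. i < 4 \<Longrightarrow> t i \<le> c"
  shows "(\<Sum>i\<in>{0..<4}. t i) \<le> 4 * c"
  using sum_bounded_above[of "{0..<4::nat}" t c] assms by simp

lemma abs_h4_fam_le:
  fixes Z :: "nat \<Rightarrow> 'a::euclidean_space \<times> 'b::euclidean_space"
  defines "A \<equiv> \<Sum>i<4. norm (fst (Z i))" and "B \<equiv> \<Sum>i<4. norm (snd (Z i))"
  shows "\<bar>h4_fam Z\<bar> \<le> 18 * A * B"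
proof -
  define dX where "dX i j = norm (fst (Z i) - fst (Z j))" for i j
  define dY where "dY i j = norm (snd (Z i) - snd (Z j))" for i j
  define I where "I = {0..<4::nat}"
  have "A = (\<Sum>k\<in>I. norm (fst (Z k)))" "B = (\<Sum>k\<in>I. norm (snd (Z k)))"
    unfolding A_def B_def I_def by (simp_all add: atLeast0LessThan)
  then have dX_le: "dX i j \<le> A" and dY_le: "dY i j \<le> B" if "i < 4" "j < 4" for i j
    using that unfolding dX_def dY_def I_def by (auto intro: norm_diff_le_sum_norm)
  have dX_nonneg: "0 \<le> dX i j" and dY_nonneg: "0 \<le> dY i j" for i j
    by (simp_all add: dX_def dY_def)
  have "0 \<le> A" "0 \<le> B"
    unfolding A_def B_def by (simp_all add: sum_nonneg)
  define T1 where "T1 = (\<Sum>i\<in>I. \<Sum>j\<in>I - {i}. dX i j * dY i j)"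
  define T2 where "T2 = (\<Sum>i\<in>I. (\<Sum>j\<in>I - {i}. dX i j) * (\<Sum>j\<in>I - {i}. dY i j))"
  define SX where "SX = (\<Sum>i\<in>I. \<Sum>j\<in>I - {i}. dX i j)"
  define SY where "SY = (\<Sum>i\<in>I. \<Sum>j\<in>I - {i}. dY i j)"
  have h4_fam_eq: "h4_fam Z = T1 / 4 - T2 / 4 + SX * SY / 24"
    unfolding h4_fam_def Let_def T1_def T2_def SX_def SY_def dX_def dY_def I_def by simp
  have row_X: "(\<Sum>j\<in>I - {i}. dX i j) \<le> 3 * A" and row_Y: "(\<Sum>j\<in>I - {i}. dY i j) \<le> 3 * B"
    if "i < 4" for i
    unfolding I_def using that dX_le dY_le by (simp_all add: sum_four_remove_le)
  have "T1 \<le> 4 * (3 * (A * B))"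
    unfolding T1_def I_def using \<open>0 \<le> A\<close> dX_le dY_le dX_nonneg dY_nonneg
    by (intro sum_four_le sum_four_remove_le mult_mono) auto
  moreover have "T2 \<le> 4 * ((3 * A) * (3 * B))"
    unfolding T2_def using \<open>0 \<le> A\<close> row_X row_Y dY_nonneg
    by (intro sum_four_le[unfolded I_def[symmetric]] mult_mono) (auto intro: sum_nonneg)
  moreover have "SX * SY \<le> (4 * (3 * A)) * (4 * (3 * B))"
    unfolding SX_def SY_def using \<open>0 \<le> A\<close> row_X row_Y dY_nonneg
    by (intro sum_four_le[unfolded I_def[symmetric]] mult_mono) (auto intro!: sum_nonneg)
  moreover have "0 \<le> T1" "0 \<le> T2" "0 \<le> SX * SY"
    unfolding T1_def T2_def SX_def SY_def using dX_nonneg dY_nonneg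
    by (auto intro!: sum_nonneg mult_nonneg_nonneg)
  \<comment> \<open>\<open>18 = 12/4 + 36/4 + 144/24\<close>\<close>
  ultimately show ?thesis
    unfolding h4_fam_eq by (simp add: abs_le_iff algebra_simps)
qed

definition pair_weight :: "'a::real_normed_vector \<times> 'b::real_normed_vector \<Rightarrow> real" where
  "pair_weight z = (1 + norm (fst z)) * (1 + norm (snd z))"

lemma abs_h4_le_pair_weight:
  "\<bar>h4 z1 z2 z3 z4\<bar> \<le> 18 * (pair_weight z1 * (pair_weight z2 * (pair_weight z3 * pair_weight z4)))"
proof -
  define Z where "Z = (\<lambda>i. [z1, z2, z3, z4] ! i)"
  have "(\<Sum>i<4. norm (fst (Z i))) * (\<Sum>i<4. norm (snd (Z i)))
      \<le> (\<Prod>i<4. 1 + norm (fst (Z i))) * (\<Prod>i<4. 1 + norm (snd (Z i)))"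
    by (intro mult_mono sum_le_prod_one_plus) (auto intro: sum_nonneg prod_nonneg)
  also have "\<dots> = pair_weight z1 * (pair_weight z2 * (pair_weight z3 * pair_weight z4))"
    unfolding Z_def pair_weight_def by (simp add: eval_nat_numeral lessThan_Suc mult_ac)
  finally show ?thesis
    using abs_h4_fam_le[of Z] unfolding h4_def Z_def by simp
qed

lemma borel_measurable_h4_fam:
  fixes Z :: "'c \<Rightarrow> nat \<Rightarrow> 'a::euclidean_space \<times> 'b::euclidean_space"
  assumes "\<And>i. i < 4 \<Longrightarrow> (\<lambda>x. Z x i) \<in> borel_measurable M"
  shows "(\<lambda>x. h4_fam (Z x)) \<in> borel_measurable M"
proof -
  have "(\<lambda>x. fst (Z x i)) \<in> borel_measurable M" "(\<lambda>x. snd (Z x i)) \<in> borel_measurable M"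
    if "i < 4" for i
    using assms[OF that] by (simp_all add: borel_prod[symmetric] measurable_fst' measurable_snd')
  then show ?thesis
    unfolding h4_fam_def Let_def
    by (intro borel_measurable_add borel_measurable_diff borel_measurable_times borel_measurable_sum
        borel_measurable_const borel_measurable_norm) auto
qed

lemma borel_measurable_h4:
  fixes f1 :: "'c \<Rightarrow> 'a::euclidean_space \<times> 'b::euclidean_space"
  assumes "f1 \<in> borel_measurable M" "f2 \<in> borel_measurable M"
    and "f3 \<in> borel_measurable M" "f4 \<in> borel_measurable M"
  shows "(\<lambda>x. h4 (f1 x) (f2 x) (f3 x) (f4 x)) \<in> borel_measurable M"
  unfolding h4_def
proof (rule borel_measurable_h4_fam)
  fix i :: nat
  assume "i < 4"
  then consider "i = 0" | "i = 1" | "i = 2" | "i = 3"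
    by linarith
  then show "(\<lambda>x. [f1 x, f2 x, f3 x, f4 x] ! i) \<in> borel_measurable M"
    by cases (simp_all add: assms numeral_eq_Suc)
qed

lemma finite_variance_dominated:
  fixes f g :: "'c \<Rightarrow> real"
  assumes f: "f \<in> borel_measurable M" and g: "finite_variance M g"
    and le: "\<And>x. x \<in> space M \<Longrightarrow> \<bar>f x\<bar> \<le> c * g x"
  shows "finite_variance M f"
  unfolding finite_variance_def
proof
  have "integrable M (\<lambda>x. c * g x)"
    using g unfolding finite_variance_def by simp
  moreover have "AE x in M. norm (f x) \<le> norm (c * g x)"
    using le by (intro AE_I2) (auto intro: order.trans[OF _ abs_ge_self])
  ultimately show "integrable M f"
    by (rule Bochner_Integration.integrable_bound[OF _ f])
  have "integrable M (\<lambda>x. c\<^sup>2 * (g x)\<^sup>2)"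
    using g unfolding finite_variance_def by simp
  moreover have "(\<lambda>x. (f x)\<^sup>2) \<in> borel_measurable M"
    using f by measurable
  moreover have "AE x in M. norm ((f x)\<^sup>2) \<le> norm (c\<^sup>2 * (g x)\<^sup>2)"
    using power_mono[OF le abs_ge_zero, of _ 2] by (intro AE_I2) (simp add: power_mult_distrib)
  ultimately show "integrable M (\<lambda>x. (f x)\<^sup>2)"
    by (rule Bochner_Integration.integrable_bound)
qed

lemma integrable_product_fst_snd:
  fixes f :: "'c \<Rightarrow> real" and g :: "'d \<Rightarrow> real"
  assumes "sigma_finite_measure M" "sigma_finite_measure N"
    and f: "integrable M f" and g: "integrable N g"
  shows "integrable (M \<Otimes>\<^sub>M N) (\<lambda>w. f (fst w) * g (snd w))"
proof -
  interpret pair_sigma_finite M N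
    using assms(1,2) by (simp add: pair_sigma_finite_def)
  have [measurable]: "f \<in> borel_measurable M" "g \<in> borel_measurable N"
    using f g by auto
  show ?thesis
  proof (rule Fubini_integrable)
    have "(\<lambda>x. \<integral>y. norm (f (fst (x, y)) * g (snd (x, y))) \<partial>N) = (\<lambda>x. \<bar>f x\<bar> * (\<integral>y. \<bar>g y\<bar> \<partial>N))"
      by (simp add: abs_mult)
    then show "integrable M (\<lambda>x. \<integral>y. norm (f (fst (x, y)) * g (snd (x, y))) \<partial>N)"
      using f by simp
  qed (use g in simp_all)
qed

lemma finite_variance_product_fst_snd:
  fixes f :: "'c \<Rightarrow> real" and g :: "'d \<Rightarrow> real"
  assumes "sigma_finite_measure M" "sigma_finite_measure N"
    and "finite_variance M f" "finite_variance N g"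
  shows "finite_variance (M \<Otimes>\<^sub>M N) (\<lambda>w. f (fst w) * g (snd w))"
  using integrable_product_fst_snd[OF assms(1,2), of f g]
    integrable_product_fst_snd[OF assms(1,2), of "\<lambda>x. (f x)\<^sup>2" "\<lambda>y. (g y)\<^sup>2"] assms(3,4)
  unfolding finite_variance_def by (simp add: power_mult_distrib)

lemma finite_variance_partial_integral:
  fixes k :: "'c \<Rightarrow> 'd \<Rightarrow> real"
  assumes N: "sigma_finite_measure N"
    and k: "(\<lambda>w. k (fst w) (snd w)) \<in> borel_measurable (M \<Otimes>\<^sub>M N)"
    and g: "finite_variance M g" and G: "integrable N G"
    and le: "\<And>x y. x \<in> space M \<Longrightarrow> y \<in> space N \<Longrightarrow> \<bar>k x y\<bar> \<le> c * g x * G y"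
  shows "finite_variance M (\<lambda>x. \<integral>y. k x y \<partial>N)"
proof (rule finite_variance_dominated[OF _ g])
  show "(\<lambda>x. \<integral>y. k x y \<partial>N) \<in> borel_measurable M"
    using sigma_finite_measure.borel_measurable_lebesgue_integral[OF N] k by (simp add: split_beta')
  fix x
  assume x: "x \<in> space M"
  have "\<bar>\<integral>y. k x y \<partial>N\<bar> \<le> (\<integral>y. \<bar>k x y\<bar> \<partial>N)"
    using integral_norm_bound[of N "k x"] by simp
  also have "\<dots> \<le> (\<integral>y. c * g x * G y \<partial>N)"
    using G le[OF x] by (intro integral_mono') (auto intro: order.trans[OF abs_ge_zero])
  also have "\<dots> = (c * (\<integral>y. G y \<partial>N)) * g x"
    by (simp add: mult_ac)
  finally show "\<bar>\<integral>y. k x y \<partial>N\<bar> \<le> (c * (\<integral>y. G y \<partial>N)) * g x" .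
qed

lemma finite_variance_pair_weight:
  fixes mu :: "('a::euclidean_space \<times> 'b::euclidean_space) measure"
  assumes "prob_space mu" and sets_mu: "sets mu = sets borel"
    and "integrable mu (\<lambda>(x, y). (norm x)\<^sup>2)" "integrable mu (\<lambda>(x, y). (norm y)\<^sup>2)"
    and "integrable mu (\<lambda>(x, y). (norm x)\<^sup>2 * (norm y)\<^sup>2)"
  shows "finite_variance mu pair_weight"
proof -
  interpret prob_space mu by fact
  define m where "m z = 4 * (1 + (norm (fst z))\<^sup>2 + (norm (snd z))\<^sup>2 + (norm (fst z))\<^sup>2 * (norm (snd z))\<^sup>2)"
    for z :: "'a \<times> 'b"
  have "integrable mu m"
    using assms(3-5) unfolding m_def by (simp add: split_beta')
  have w_meas: "pair_weight \<in> borel_measurable mu"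
    unfolding pair_weight_def measurable_cong_sets[OF sets_mu refl]
    by (intro borel_measurable_continuous_onI continuous_intros)
  have "(pair_weight z)\<^sup>2 \<le> m z" for z
  proof -
    have sq: "(1 + t)\<^sup>2 \<le> 2 * (1 + t\<^sup>2)" for t :: real
      using sum_squares_ge_zero[of "1 - t" 0] by (simp add: power2_eq_square algebra_simps)
    have "(pair_weight z)\<^sup>2 = (1 + norm (fst z))\<^sup>2 * (1 + norm (snd z))\<^sup>2"
      unfolding pair_weight_def by (simp add: power_mult_distrib)
    also have "\<dots> \<le> (2 * (1 + (norm (fst z))\<^sup>2)) * (2 * (1 + (norm (snd z))\<^sup>2))"
      by (intro mult_mono sq) auto
    also have "\<dots> = m z"
      unfolding m_def by (simp add: algebra_simps)
    finally show ?thesis .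
  qed
  then have "integrable mu (\<lambda>z. (pair_weight z)\<^sup>2)"
    using w_meas by (intro Bochner_Integration.integrable_bound[OF \<open>integrable mu m\<close>] AE_I2)
      (auto intro: order.trans[OF _ abs_ge_self])
  then show ?thesis
    unfolding finite_variance_def using w_meas by (simp add: square_integrable_imp_integrable)
qed

theorem lemma4p8:
  fixes mu :: "('a::euclidean_space \<times> 'b::euclidean_space) measure"
  assumes "prob_space mu"
    and "sets mu = sets borel"
    and "integrable mu (\<lambda>(x, y). (norm x)\<^sup>2)"
    and "integrable mu (\<lambda>(x, y). (norm y)\<^sup>2)"
    and "integrable mu (\<lambda>(x, y). (norm x)\<^sup>2 * (norm y)\<^sup>2)"
  shows "finite_variance (mu \<Otimes>\<^sub>M (mu \<Otimes>\<^sub>M (mu \<Otimes>\<^sub>M mu)))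
           (\<lambda>w. h4 (fst w) (fst (snd w)) (fst (snd (snd w))) (snd (snd (snd w))))
         \<and> finite_variance mu (h1 mu)
         \<and> finite_variance (mu \<Otimes>\<^sub>M mu) (\<lambda>w. h2 mu (fst w) (snd w))"
proof -
  let ?w = "pair_weight :: 'a \<times> 'b \<Rightarrow> real"
  define W2 where "W2 v = ?w (fst v) * ?w (snd v)" for v
  define W3 where "W3 v = ?w (fst v) * W2 (snd v)" for v
  define W4 where "W4 v = ?w (fst v) * W3 (snd v)" for v
  have sf1: "sigma_finite_measure mu" and sf2: "sigma_finite_measure (mu \<Otimes>\<^sub>M mu)"
    and sf3: "sigma_finite_measure (mu \<Otimes>\<^sub>M (mu \<Otimes>\<^sub>M mu))"
    using assms(1) by (auto intro!: prob_space_imp_sigma_finite prob_space_pair)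
  have fv1: "finite_variance mu ?w"
    using assms by (rule finite_variance_pair_weight)
  have fv2: "finite_variance (mu \<Otimes>\<^sub>M mu) W2"
    unfolding W2_def[abs_def] using sf1 sf1 fv1 fv1 by (rule finite_variance_product_fst_snd)
  have fv3: "finite_variance (mu \<Otimes>\<^sub>M (mu \<Otimes>\<^sub>M mu)) W3"
    unfolding W3_def[abs_def] using sf1 sf2 fv1 fv2 by (rule finite_variance_product_fst_snd)
  have fv4: "finite_variance (mu \<Otimes>\<^sub>M (mu \<Otimes>\<^sub>M (mu \<Otimes>\<^sub>M mu))) W4"
    unfolding W4_def[abs_def] using sf1 sf3 fv1 fv3 by (rule finite_variance_product_fst_snd)
  have meas: "f \<in> borel_measurable M" if "f \<in> measurable M mu" for f and M :: "'c measure"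
    using that by (simp add: measurable_cong_sets[OF refl assms(2)])
  have "\<bar>h4 (fst v) (fst (snd v)) (fst (snd (snd v))) (snd (snd (snd v)))\<bar> \<le> 18 * W4 v" for v
    unfolding W4_def W3_def W2_def by (rule abs_h4_le_pair_weight)
  then have "finite_variance (mu \<Otimes>\<^sub>M (mu \<Otimes>\<^sub>M (mu \<Otimes>\<^sub>M mu)))
      (\<lambda>w. h4 (fst w) (fst (snd w)) (fst (snd (snd w))) (snd (snd (snd w))))"
    by (intro finite_variance_dominated[OF _ fv4] borel_measurable_h4 meas) auto
  moreover have "\<bar>h4 z (fst v) (fst (snd v)) (snd (snd v))\<bar> \<le> 18 * ?w z * W3 v" for z v
    using abs_h4_le_pair_weight unfolding W3_def W2_def by (simp add: mult.assoc)
  then have "finite_variance mu (h1 mu)"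
    using fv3 unfolding h1_def[abs_def] finite_variance_def[of _ W3]
    by (intro finite_variance_partial_integral[OF sf3 _ fv1] borel_measurable_h4 meas) auto
  moreover have "\<bar>h4 (fst x) (snd x) (fst y) (snd y)\<bar> \<le> 18 * W2 x * W2 y" for x y
    using abs_h4_le_pair_weight[of "fst x" "snd x" "fst y" "snd y"] unfolding W2_def
    by (simp add: mult_ac)
  then have "finite_variance (mu \<Otimes>\<^sub>M mu) (\<lambda>w. h2 mu (fst w) (snd w))"
    using fv2 unfolding h2_def finite_variance_def[of _ W2]
    by (intro finite_variance_partial_integral[OF sf2 _ fv2] borel_measurable_h4 meas) auto
  ultimately show ?thesis by blast
qed

end
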